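(* The sequence $\{\rho^m(S(i))\}$, where $i$ ranges over the integers $i\ge 7$ with $i\equiv 3\pmod 4$, is unbounded. In particular, $\rho^m(\mathfrak{N})=\infty$.
   Context: $\mathbb{N}$ denotes the non-negative integers. A numerical semigroup is a submonoid of $(\mathbb{N},+)$ with finite complement; $\mathfrak{N}$ denotes the set of all numerical semigroups. A numerical semigroup is irreducible if it cannot be written as the intersection of two numerical semigroups properly containing it. For an odd integer $j\ge 3$, $T(j)=\{0,\tfrac{j+1}{2},\tfrac{j+1}{2}+1,\dots,j-1\}\cup\{n\in\mathbb{Z}:n\ge j+1\}$. For odd $i\ge5$, $S(i)=\langle 2,i\rangle\cap T(i)$, where $\langle 2,i\rangle=\{2x+iy:x,y\in\mathbb{N}\}$. Given a numerical semigroup $S$ and irreducible numerical semigroups $S_1,\dots,S_n$, the expression $S_1\cap\dots\cap S_n$ is a factorization of $S$ (of length $n$) if $S=S_1\cap\dots\cap S_n$ and $S\neq\bigcap_{j\in J}S_j$ for every nonempty proper subset $J\subsetneq\{1,\dots,n\}$. $\mathsf{L}^m(S)$ is the set of positive integers $n$ such that $S$ has a factorization of length $n$. The elasticity is $\rho^m(S)=\sup\mathsf{L}^m(S)/\min\mathsf{L}^m(S)$, and $\rho^m(\mathfrak{N})=\sup\{\rho^m(S):S\in\mathfrak{N}\}$. *)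

theory Defs
  imports Main "HOL-Library.Extended_Real"
begin

definition numerical_semigroup :: "nat set \<Rightarrow> bool" where
  "numerical_semigroup S \<longleftrightarrow>
     0 \<in> S \<and> (\<forall>x\<in>S. \<forall>y\<in>S. x + y \<in> S) \<and> finite (UNIV - S)"

definition irreducible_ns :: "nat set \<Rightarrow> bool" where
  "irreducible_ns S \<longleftrightarrow> numerical_semigroup S \<and>
     \<not> (\<exists>S1 S2. numerical_semigroup S1 \<and> numerical_semigroup S2 \<and>
              S \<subset> S1 \<and> S \<subset> S2 \<and> S = S1 \<inter> S2)"

definition T_sg :: "nat \<Rightarrow> nat set" where
  "T_sg j = {0} \<union> {(j + 1) div 2 ..< j} \<union> {j + 1 ..}"

definition gen2 :: "nat \<Rightarrow> nat set" where
  "gen2 i = {2 * x + i * y | x y. True}"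

definition S_sg :: "nat \<Rightarrow> nat set" where
  "S_sg i = gen2 i \<inter> T_sg i"

definition is_factorization :: "nat set \<Rightarrow> nat \<Rightarrow> (nat \<Rightarrow> nat set) \<Rightarrow> bool" where
  "is_factorization S n F \<longleftrightarrow> n \<ge> 1 \<and> (\<forall>j<n. irreducible_ns (F j)) \<and>
     S = (\<Inter>j\<in>{..<n}. F j) \<and>
     (\<forall>J. J \<noteq> {} \<and> J \<subset> {..<n} \<longrightarrow> S \<noteq> (\<Inter>j\<in>J. F j))"

definition Lm :: "nat set \<Rightarrow> nat set" where
  "Lm S = {n. n > 0 \<and> (\<exists>F. is_factorization S n F)}"

definition rho_m :: "nat set \<Rightarrow> ereal" where
  "rho_m S = Sup ((\<lambda>n. ereal (real n)) ` Lm S) / ereal (real (Min (Lm S)))"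

definition rho_m_all :: ereal where
  "rho_m_all = Sup (rho_m ` {S. numerical_semigroup S})"

end

theory Submission
  imports Defs
begin

text \<open>Both \<open>\<langle>2,i\<rangle>\<close> and \<open>T(i)\<close> are irreducible, so \<open>S(i) = \<langle>2,i\<rangle> \<inter> T(i)\<close> has a
  factorization of length 2. For \<open>i = 4k + 3\<close>, however, the gaps of \<open>S(i)\<close> from \<open>(i+1)/2\<close>
  on are exactly the odd numbers \<open>j = 2k+3, \<dots>, 4k+3\<close>, and \<open>T(j)\<close> contains \<open>S(i)\<close> and has
  \<open>j\<close> as its only gap in that range. Hence \<open>S(i)\<close> is the irredundant intersection of these
  \<open>k + 1\<close> irreducible semigroups. A numerical semigroup has only finitely many
  oversemigroups, so its factorization lengths are bounded and \<open>\<rho>\<^sup>m(S(4k+3)) \<ge> (k+1)/2\<close>.\<close>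

text \<open>Every numerical semigroup properly containing \<open>S\<close> contains \<open>f\<close>, so \<open>S\<close> is not the
  intersection of two of them.\<close>

lemma irreducible_nsI:
  assumes ns: "numerical_semigroup S" and f: "f \<notin> S"
    and above: "\<And>x. x > f \<Longrightarrow> x \<in> S"
    and gaps: "\<And>g. g \<notin> S \<Longrightarrow> g \<noteq> f \<Longrightarrow> 2 * g \<noteq> f \<Longrightarrow> f - g \<in> S"
  shows "irreducible_ns S"
proof -
  have "f \<in> S'" if ns': "numerical_semigroup S'" and "S \<subset> S'" for S'
  proof -
    obtain g where g: "g \<in> S'" "g \<notin> S" using \<open>S \<subset> S'\<close> by blast
    have add: "x + y \<in> S'" if "x \<in> S'" "y \<in> S'" for x y
      using ns' that unfolding numerical_semigroup_def by blast
    have "g \<le> f" using above g by (meson not_le)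
    consider "g = f" | "2 * g = f" | "g \<noteq> f" "2 * g \<noteq> f" by blast
    then show ?thesis
    proof cases
      case 2
      then show ?thesis using add[OF g(1) g(1)] by (simp add: mult_2)
    next
      case 3
      then have "f - g \<in> S'" using gaps[OF g(2)] \<open>S \<subset> S'\<close> by blast
      then show ?thesis using add[OF g(1)] \<open>g \<le> f\<close> by fastforce
    qed (use g in simp)
  qed
  then show ?thesis unfolding irreducible_ns_def using ns f by blast
qed

lemma numerical_semigroupI_half:
  assumes "0 \<in> S" and above: "\<And>x. x > p \<Longrightarrow> x \<in> S"
    and large: "\<And>x. x \<in> S \<Longrightarrow> x \<noteq> 0 \<Longrightarrow> p < 2 * x"
  shows "numerical_semigroup S"
proof -
  have "UNIV - S \<subseteq> {..p}" using above not_le by blast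
  then have "finite (UNIV - S)" by (rule finite_subset) simp
  moreover have "x + y \<in> S" if "x \<in> S" "y \<in> S" for x y
    using that large[OF \<open>x \<in> S\<close>] large[OF \<open>y \<in> S\<close>] above[of "x + y"]
    by (cases "x = 0 \<or> y = 0") auto
  ultimately show ?thesis using \<open>0 \<in> S\<close> unfolding numerical_semigroup_def by blast
qed

lemma mem_T_sg: "x \<in> T_sg j \<longleftrightarrow> x = 0 \<or> ((j + 1) div 2 \<le> x \<and> x < j) \<or> j < x"
  by (auto simp: T_sg_def)

lemma mem_gen2:
  assumes "odd i"
  shows "x \<in> gen2 i \<longleftrightarrow> even x \<or> i \<le> x"
proof
  assume "x \<in> gen2 i"
  then obtain a b where "x = 2 * a + i * b" by (auto simp: gen2_def)
  then show "even x \<or> i \<le> x" by (cases b) auto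
next
  assume "even x \<or> i \<le> x"
  then obtain a b where "x = 2 * a + i * b"
  proof (cases "even x")
    case False
    with \<open>even x \<or> i \<le> x\<close> assms have "i \<le> x" "even (x - i)" by auto
    then show ?thesis using that[of "(x - i) div 2" 1] by simp
  qed (use that[of "x div 2" 0] in simp)
  then show "x \<in> gen2 i" by (auto simp: gen2_def)
qed

lemma mem_S_sg:
  assumes "odd i"
  shows "x \<in> S_sg i \<longleftrightarrow> x = 0 \<or> (even x \<and> (i + 1) div 2 \<le> x \<and> x < i) \<or> i < x"
  using assms by (auto simp: S_sg_def mem_T_sg mem_gen2)

lemma irreducible_T_sg:
  assumes "odd j"
  shows "irreducible_ns (T_sg j)"
proof (rule irreducible_nsI[of _ j])
  show "numerical_semigroup (T_sg j)"
    by (rule numerical_semigroupI_half[of _ j]) (use assms in \<open>auto simp: mem_T_sg\<close>)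
qed (use assms in \<open>auto simp: mem_T_sg elim!: oddE\<close>)

lemma irreducible_gen2:
  assumes "odd i" "i \<ge> 3"
  shows "irreducible_ns (gen2 i)"
proof -
  obtain b where b: "i = 2 * b + 1" using assms(1) by (auto elim: oddE)
  note mem = mem_gen2[OF assms(1)]
  show ?thesis
  proof (rule irreducible_nsI[of _ "i - 2"])
    have "x + y \<in> gen2 i" if "x \<in> gen2 i" "y \<in> gen2 i" for x y
      using that by (auto simp: mem)
    moreover have "finite (UNIV - gen2 i)"
      by (rule finite_subset[of _ "{..i}"]) (auto simp: mem)
    ultimately show "numerical_semigroup (gen2 i)"
      by (auto simp: numerical_semigroup_def mem)
    show "i - 2 \<notin> gen2 i" unfolding mem using b assms(2) by auto
    show "x \<in> gen2 i" if "x > i - 2" for x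
      unfolding mem using that b by presburger
    show "i - 2 - g \<in> gen2 i" if "g \<notin> gen2 i" for g
    proof -
      obtain c where "g = 2 * c + 1" "g < i"
        using \<open>g \<notin> gen2 i\<close> by (auto simp: mem elim: oddE)
      then have "i - 2 - g = 2 * (b - 1 - c)" using b by auto
      then show ?thesis by (simp add: mem)
    qed
  qed
qed

lemma numerical_semigroup_S_sg:
  assumes "odd i"
  shows "numerical_semigroup (S_sg i)"
  by (rule numerical_semigroupI_half[of _ i]) (use assms in \<open>auto simp: mem_S_sg\<close>)

lemma is_factorizationI:
  assumes "n \<ge> 1" "\<And>j. j < n \<Longrightarrow> irreducible_ns (F j)"
    and S: "S = (\<Inter>j\<in>{..<n}. F j)"
    and witness: "\<And>j. j < n \<Longrightarrow> \<exists>x. x \<notin> F j \<and> (\<forall>l<n. l \<noteq> j \<longrightarrow> x \<in> F l)"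
  shows "is_factorization S n F"
  unfolding is_factorization_def
proof (intro conjI allI impI)
  fix J assume J: "J \<noteq> {} \<and> J \<subset> {..<n}"
  then obtain j where j: "j < n" "j \<notin> J" by blast
  obtain x where "x \<notin> F j" "\<forall>l<n. l \<noteq> j \<longrightarrow> x \<in> F l" using witness[OF j(1)] by blast
  then have "x \<in> (\<Inter>l\<in>J. F l)" "x \<notin> S" using S j J by auto
  then show "S \<noteq> (\<Inter>l\<in>J. F l)" by blast
qed (use assms in auto)

lemma is_factorization_inj:
  assumes "is_factorization S n F"
  shows "inj_on F {..<n}"
proof (rule inj_onI, rule ccontr)
  fix j l assume jl: "j \<in> {..<n}" "l \<in> {..<n}" "F j = F l" "j \<noteq> l"
  have "(\<Inter>k\<in>{..<n}. F k) = (\<Inter>k\<in>{..<n} - {l}. F k)"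
    using jl by (auto intro: INT_I elim: INT_E)
  moreover have "{..<n} - {l} \<noteq> {} \<and> {..<n} - {l} \<subset> {..<n}" using jl by auto
  ultimately show False using assms unfolding is_factorization_def by metis
qed

lemma finite_Lm:
  assumes "numerical_semigroup S"
  shows "finite (Lm S)"
proof -
  define C where "C = {T. S \<subseteq> T}"
  have "C \<subseteq> (\<lambda>G. UNIV - G) ` Pow (UNIV - S)"
    unfolding C_def by (auto intro!: image_eqI[where x = "UNIV - _"])
  moreover have "finite (UNIV - S)" using assms by (simp add: numerical_semigroup_def)
  ultimately have "finite C" by (meson finite_Pow_iff finite_imageI finite_subset)
  have "Lm S \<subseteq> {..card C}"
  proof
    fix n assume "n \<in> Lm S"
    then obtain F where F: "is_factorization S n F" by (auto simp: Lm_def)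
    have "F ` {..<n} \<subseteq> C" using F unfolding is_factorization_def C_def by auto
    then have "card (F ` {..<n}) \<le> card C" using \<open>finite C\<close> by (rule card_mono[rotated])
    then show "n \<in> {..card C}" using card_image[OF is_factorization_inj[OF F]] by simp
  qed
  then show ?thesis by (rule finite_subset) simp
qed

lemma rho_m_ge:
  assumes "numerical_semigroup S" "n \<in> Lm S" "m \<in> Lm S"
  shows "ereal (real n / real m) \<le> rho_m S"
proof -
  define m0 where "m0 = Min (Lm S)"
  have "m0 \<in> Lm S" "m0 \<le> m"
    using finite_Lm[OF assms(1)] assms(3) unfolding m0_def by (auto intro: Min_in)
  then have "m0 > 0" by (simp add: Lm_def)
  have "ereal (real n / real m) \<le> ereal (real n / real m0)"
    using \<open>m0 > 0\<close> \<open>m0 \<le> m\<close> by (simp add: frac_le)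
  also have "ereal (real n / real m0) = ereal (real n) / ereal (real m0)"
    using \<open>m0 > 0\<close> by simp
  also have "\<dots> \<le> Sup ((\<lambda>n. ereal (real n)) ` Lm S) / ereal (real m0)"
    using assms(2) \<open>m0 > 0\<close> by (intro ereal_divide_right_mono Sup_upper) auto
  finally show ?thesis unfolding rho_m_def m0_def .
qed

lemma S_sg_eq_INT_T_sg:
  "S_sg (4 * k + 3) = (\<Inter>j\<in>{..<k + 1}. T_sg (2 * k + 3 + 2 * j))"
proof (rule set_eqI)
  fix x
  have odd_gap: "(\<exists>j<k + 1. x = 2 * k + 3 + 2 * j) \<longleftrightarrow>
      odd x \<and> 2 * k + 2 \<le> x \<and> x \<le> 4 * k + 3"
  proof
    assume "odd x \<and> 2 * k + 2 \<le> x \<and> x \<le> 4 * k + 3"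
    moreover obtain c where "x = 2 * c + 1" using calculation by (auto elim: oddE)
    ultimately show "\<exists>j<k + 1. x = 2 * k + 3 + 2 * j"
      by (intro exI[of _ "c - (k + 1)"]) auto
  next
    assume "\<exists>j<k + 1. x = 2 * k + 3 + 2 * j"
    then obtain j where "j < k + 1" "x = 2 * k + 3 + 2 * j" by blast
    then show "odd x \<and> 2 * k + 2 \<le> x \<and> x \<le> 4 * k + 3" by simp
  qed
  have "(2 * k + 3 + 2 * j + 1) div 2 = k + 2 + j" for j by simp
  then have "x \<in> (\<Inter>j\<in>{..<k + 1}. T_sg (2 * k + 3 + 2 * j)) \<longleftrightarrow>
      (\<forall>j<k + 1. x = 0 \<or> (k + 2 + j \<le> x \<and> x \<noteq> 2 * k + 3 + 2 * j))"
    by (auto simp: mem_T_sg)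
  also have "\<dots> \<longleftrightarrow> x = 0 \<or> (2 * k + 2 \<le> x \<and> \<not> (\<exists>j<k + 1. x = 2 * k + 3 + 2 * j))"
  proof
    assume "\<forall>j<k + 1. x = 0 \<or> (k + 2 + j \<le> x \<and> x \<noteq> 2 * k + 3 + 2 * j)"
    then show "x = 0 \<or> (2 * k + 2 \<le> x \<and> \<not> (\<exists>j<k + 1. x = 2 * k + 3 + 2 * j))"
      using spec[of _ k] by fastforce
  qed auto
  also have "\<dots> \<longleftrightarrow> x \<in> S_sg (4 * k + 3)"
    unfolding odd_gap mem_S_sg[of "4 * k + 3", simplified] by (cases "x = 4 * k + 3") auto
  finally show "x \<in> S_sg (4 * k + 3) \<longleftrightarrow> x \<in> (\<Inter>j\<in>{..<k + 1}. T_sg (2 * k + 3 + 2 * j))"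
    by blast
qed

lemma plus_one_mem_Lm_S_sg: "k + 1 \<in> Lm (S_sg (4 * k + 3))"
proof -
  have "is_factorization (S_sg (4 * k + 3)) (k + 1) (\<lambda>j. T_sg (2 * k + 3 + 2 * j))"
    by (rule is_factorizationI[OF _ _ S_sg_eq_INT_T_sg])
      (auto intro!: irreducible_T_sg exI[of _ "2 * k + 3 + 2 * _"] simp: mem_T_sg)
  then show ?thesis by (auto simp: Lm_def)
qed

lemma two_mem_Lm_S_sg:
  assumes "k \<ge> 1"
  shows "2 \<in> Lm (S_sg (4 * k + 3))"
proof -
  define i where "i = 4 * k + 3"
  have "odd i" "i \<ge> 3" by (simp_all add: i_def)
  define F where "F = (\<lambda>j::nat. if j = 0 then gen2 i else T_sg i)"
  have "{..<2::nat} = {0, 1}" by auto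
  then have "S_sg i = (\<Inter>j\<in>{..<2}. F j)" by (auto simp: F_def S_sg_def)
  moreover have "\<exists>x. x \<notin> F j \<and> (\<forall>l<2. l \<noteq> j \<longrightarrow> x \<in> F l)" if "j < 2" for j
  proof (cases "j = 0")
    case True
    then show ?thesis using \<open>odd i\<close> assms
      by (intro exI[of _ "2 * k + 3"]) (auto simp: F_def mem_T_sg mem_gen2 i_def)
  next
    case False
    then show ?thesis using \<open>odd i\<close> assms \<open>j < 2\<close>
      by (intro exI[of _ 2]) (auto simp: F_def mem_T_sg mem_gen2 i_def)
  qed
  ultimately have "is_factorization (S_sg i) 2 F"
    using \<open>odd i\<close> \<open>i \<ge> 3\<close>
    by (intro is_factorizationI) (auto simp: F_def irreducible_T_sg irreducible_gen2)
  then show ?thesis by (auto simp: Lm_def i_def)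
qed

lemma rho_m_S_sg_ge:
  assumes "k \<ge> 1"
  shows "ereal ((real k + 1) / 2) \<le> rho_m (S_sg (4 * k + 3))"
  using rho_m_ge[OF numerical_semigroup_S_sg plus_one_mem_Lm_S_sg two_mem_Lm_S_sg[OF assms]]
  by (simp add: add.commute)

theorem corollary2p4:
  shows "(\<forall>B::real. \<exists>i::nat. i \<ge> 7 \<and> i mod 4 = 3 \<and> rho_m (S_sg i) > ereal B)
         \<and> rho_m_all = \<infinity>"
proof -
  have unbounded: "\<exists>i::nat. i \<ge> 7 \<and> i mod 4 = 3 \<and> rho_m (S_sg i) > ereal B" for B :: real
  proof -
    define k where "k = nat \<lceil>2 * \<bar>B\<bar>\<rceil> + 1"
    have "k \<ge> 1" by (simp add: k_def)
    have "2 * B < real k + 1"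
      using real_nat_ceiling_ge[of "2 * \<bar>B\<bar>"] abs_ge_self[of B]
      unfolding k_def of_nat_add of_nat_1 by linarith
    then have "ereal B < ereal ((real k + 1) / 2)" by simp
    also have "\<dots> \<le> rho_m (S_sg (4 * k + 3))" by (rule rho_m_S_sg_ge[OF \<open>k \<ge> 1\<close>])
    finally show ?thesis using \<open>k \<ge> 1\<close> by (intro exI[of _ "4 * k + 3"]) auto
  qed
  moreover have "rho_m_all = \<infinity>"
  proof (rule ereal_top)
    fix B
    obtain i where "i mod 4 = 3" "ereal B < rho_m (S_sg i)" using unbounded by blast
    have "numerical_semigroup (S_sg i)"
      using \<open>i mod 4 = 3\<close> by (intro numerical_semigroup_S_sg) presburger
    then have "rho_m (S_sg i) \<le> rho_m_all"
      unfolding rho_m_all_def by (rule SUP_upper[OF CollectI])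
    with \<open>ereal B < rho_m (S_sg i)\<close> show "ereal B \<le> rho_m_all" by simp
  qed
  ultimately show ?thesis by blast
qed

end
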